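(* Let Assumptions 1 and 2 hold. Let $\Gamma^\star\in\mathbb{R}^{2n\times n}$ be the unique solution of $\Gamma A_{\mathrm r}^\top+\beta\Gamma=G_{\mathrm f}$, and define $\epsilon(t)=\Gamma^\star(\mathrm{e}^{A_{\mathrm r}^\top t}-\mathrm{e}^{-\beta t}I_n)x_0$, where $x_0=x(0)$ is the initial state of the plant. Then, for every locally integrable input $u(\cdot)$ and all $t\ge 0$, \[\delta(t)=A_{\mathrm f}\phi(t)+B_{\mathrm f}\upsilon(t)+\epsilon(t).\]
   Context: Fix $n\ge 1$ and real numbers $a_1,\dots,a_n,b_1,\dots,b_n$. The plant is the continuous-time SISO system $y^{(n)}+a_1y^{(n-1)}+\dots+a_ny=b_1u^{(n-1)}+\dots+b_nu$, represented in observability canonical form $\dot x=Ax+Bu$, $y=Cx$, $x(t)\in\mathbb{R}^n$, where $C=[0_{1,n-1}\;1]$, $A$ is the $n\times n$ matrix whose first $n-1$ columns are $\begin{bmatrix}0_{1,n-1}\\ I_{n-1}\end{bmatrix}$ and whose last column is $(-a_n,\dots,-a_1)^\top$, and $B=(b_n,\dots,b_1)^\top$. Assumption 1: the polynomials $s^n+a_1s^{n-1}+\dots+a_n$ and $b_1s^{n-1}+\dots+b_n$ are coprime. For real parameters $c_1,\dots,c_n,\beta$, $A_{\mathrm r}\in\mathbb{R}^{n\times n}$ is the matrix whose first $n-1$ rows are $[0_{n-1,1}\;I_{n-1}]$ and whose last row is $(-c_n,\dots,-c_1)$, and $B_{\mathrm r}=(0,\dots,0,1)^\top\in\mathbb{R}^n$.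 Assumption 2: $-\beta$ is not an eigenvalue of $A_{\mathrm r}$. The filters are $\dot\zeta=A_{\mathrm r}\zeta+B_{\mathrm r}u$, $\zeta(0)=0$; $\dot\mu=A_{\mathrm r}\mu+B_{\mathrm r}y$, $\mu(0)=0$; $\chi=\mathrm{col}(\zeta,\mu)\in\mathbb{R}^{2n}$; $\dot\phi=-\beta\phi+\chi$, $\phi(0)=0_{2n,1}$; $\dot\upsilon=-\beta\upsilon+u$, $\upsilon(0)=0$; $\delta=\chi-\beta\phi$. Define $A_{\mathrm f}=\begin{bmatrix}A_{\mathrm r}&0_{n,n}\\ L_b& A_a\end{bmatrix}\in\mathbb{R}^{2n\times 2n}$, where $L_b\in\mathbb{R}^{n\times n}$ has all rows zero except the last, which equals $(b_n,\dots,b_1)$, and $A_a\in\mathbb{R}^{n\times n}$ has first $n-1$ rows $[0_{n-1,1}\;I_{n-1}]$ and last row $(-a_n,\dots,-a_1)$; $B_{\mathrm f}=\mathrm{col}(0_{n-1,1},1,0_{n,1})\in\mathbb{R}^{2n}$; and $G_{\mathrm f}\in\mathbb{R}^{2n\times n}$ is the matrix whose only nonzero entry is a $1$ in position $(2n,n)$. *)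

theory Defs
  imports "HOL-Analysis.Analysis" "HOL-Computational_Algebra.Polynomial"
begin

text \<open>Conventions: vectors of length m are functions nat \<Rightarrow> real used on indices 0..<m
 (0-based; paper index k corresponds to k-1); matrices are nat \<Rightarrow> nat \<Rightarrow> real
 (row, column). Coefficient sequences a, b, c are used at indices 1..n as in the paper.
 Trajectories are functions real \<Rightarrow> nat \<Rightarrow> real (time, component).\<close>

fun mpow :: "nat \<Rightarrow> (nat \<Rightarrow> nat \<Rightarrow> real) \<Rightarrow> nat \<Rightarrow> (nat \<Rightarrow> nat \<Rightarrow> real)" where
  "mpow m M 0 = (\<lambda>i j. if i = j then 1 else 0)"
| "mpow m M (Suc k) = (\<lambda>i j. \<Sum>l<m. mpow m M k i l * M l j)"

definition mexp :: "nat \<Rightarrow> (nat \<Rightarrow> nat \<Rightarrow> real) \<Rightarrow> real \<Rightarrow> (nat \<Rightarrow> nat \<Rightarrow> real)" where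
  "mexp m M t = (\<lambda>i j. \<Sum>k. (t ^ k / fact k) * mpow m M k i j)"

definition mtrans :: "(nat \<Rightarrow> nat \<Rightarrow> real) \<Rightarrow> (nat \<Rightarrow> nat \<Rightarrow> real)" where
  "mtrans M = (\<lambda>i j. M j i)"

text \<open>Observability canonical form of the plant.\<close>
definition A_plant :: "nat \<Rightarrow> (nat \<Rightarrow> real) \<Rightarrow> (nat \<Rightarrow> nat \<Rightarrow> real)" where
  "A_plant n a = (\<lambda>i j. if j = n - 1 then - a (n - i) else if i = j + 1 then 1 else 0)"

definition B_plant :: "nat \<Rightarrow> (nat \<Rightarrow> real) \<Rightarrow> (nat \<Rightarrow> real)" where
  "B_plant n b = (\<lambda>i. b (n - i))"

text \<open>Companion matrix A_r (and A_a, same shape with coefficients a).\<close>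
definition companion :: "nat \<Rightarrow> (nat \<Rightarrow> real) \<Rightarrow> (nat \<Rightarrow> nat \<Rightarrow> real)" where
  "companion n c = (\<lambda>i j. if i = n - 1 then - c (n - j) else if j = i + 1 then 1 else 0)"

definition B_r :: "nat \<Rightarrow> (nat \<Rightarrow> real)" where
  "B_r n = (\<lambda>i. if i = n - 1 then 1 else 0)"

definition L_b :: "nat \<Rightarrow> (nat \<Rightarrow> real) \<Rightarrow> (nat \<Rightarrow> nat \<Rightarrow> real)" where
  "L_b n b = (\<lambda>i j. if i = n - 1 then b (n - j) else 0)"

definition A_f :: "nat \<Rightarrow> (nat \<Rightarrow> real) \<Rightarrow> (nat \<Rightarrow> real) \<Rightarrow> (nat \<Rightarrow> real) \<Rightarrow> (nat \<Rightarrow> nat \<Rightarrow> real)" where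
  "A_f n a b c = (\<lambda>i j.
     if i < n then (if j < n then companion n c i j else 0)
     else (if j < n then L_b n b (i - n) j else companion n a (i - n) (j - n)))"

definition B_f :: "nat \<Rightarrow> (nat \<Rightarrow> real)" where
  "B_f n = (\<lambda>i. if i = n - 1 then 1 else 0)"

definition G_f :: "nat \<Rightarrow> (nat \<Rightarrow> nat \<Rightarrow> real)" where
  "G_f n = (\<lambda>i j. if i = 2 * n - 1 \<and> j = n - 1 then 1 else 0)"

definition den_poly :: "nat \<Rightarrow> (nat \<Rightarrow> real) \<Rightarrow> real poly" where
  "den_poly n a = monom 1 n + (\<Sum>k\<in>{1..n}. monom (a k) (n - k))"

definition num_poly :: "nat \<Rightarrow> (nat \<Rightarrow> real) \<Rightarrow> real poly" where
  "num_poly n b = (\<Sum>k\<in>{1..n}. monom (b k) (n - k))"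

definition is_eigenvalue :: "nat \<Rightarrow> (nat \<Rightarrow> nat \<Rightarrow> real) \<Rightarrow> real \<Rightarrow> bool" where
  "is_eigenvalue m M lam \<longleftrightarrow>
     (\<exists>v. (\<exists>i<m. v i \<noteq> 0) \<and> (\<forall>i<m. (\<Sum>j<m. M i j * v j) = lam * v i))"

text \<open>z solves z' = M z + f(t) on [0,\<infinity>) with z(0) = z0, in the Caratheodory
 (integral-equation) sense.\<close>
definition lin_sol :: "nat \<Rightarrow> (nat \<Rightarrow> nat \<Rightarrow> real) \<Rightarrow> (real \<Rightarrow> nat \<Rightarrow> real)
    \<Rightarrow> (nat \<Rightarrow> real) \<Rightarrow> (real \<Rightarrow> nat \<Rightarrow> real) \<Rightarrow> bool" where
  "lin_sol m M f z0 z \<longleftrightarrow>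
     (\<forall>t\<ge>0. \<forall>i<m. ((\<lambda>s. (\<Sum>j<m. M i j * z s j) + f s i) has_integral (z t i - z0 i)) {0..t})"

end

theory Submission
  imports Defs
begin

text \<open>With \<open>E(t) = e\<^bsup>A\<^sub>r\<^sup>T t\<^esup> x\<^sub>0\<close>, the plant output is \<open>y = L\<^sub>b \<zeta> + (c - a) \<mu> + E\<^sub>n\<close>: in integral
  form both sides are sent by the Volterra operator \<open>1 + c\<^sub>1 I + ... + c\<^sub>n I\<^sup>n\<close> (\<open>I\<close> = integration
  from 0) to the same polynomial in \<open>t\<close> determined by \<open>x\<^sub>0\<close>, and this operator is injective.
  Hence the stacked filter state \<open>\<chi> = (\<zeta>, \<mu>)\<close> obeys \<open>\<chi>' = A\<^sub>f \<chi> + B\<^sub>f u + G\<^sub>f E\<close>.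
  The Sylvester equation for \<open>\<Gamma>\<close> makes \<open>\<epsilon>\<close> the output of the filter \<open>1/(s + \<beta>)\<close> driven by
  \<open>G\<^sub>f E\<close>, so \<open>\<delta> - A\<^sub>f \<phi> - B\<^sub>f \<upsilon> - \<epsilon>\<close> solves \<open>w' = - \<beta> w\<close>, \<open>w(0) = 0\<close>, and vanishes.\<close>

section \<open>Integration from zero\<close>

definition prim :: "(real \<Rightarrow> real) \<Rightarrow> real \<Rightarrow> real" where
  "prim f t = integral {0..t} f"

definition loc_int :: "(real \<Rightarrow> real) \<Rightarrow> bool" where
  "loc_int f \<longleftrightarrow> (\<forall>t. f integrable_on {0..t})"

lemma loc_int_continuous: "(\<And>t. continuous_on {0..t} f) \<Longrightarrow> loc_int f"
  unfolding loc_int_def by (simp add: integrable_continuous_interval)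

lemma continuous_on_prim: "loc_int f \<Longrightarrow> continuous_on {0..t} (prim f)"
  unfolding loc_int_def prim_def by (simp add: indefinite_integral_continuous_1)

lemma has_integral_prim: "loc_int f \<Longrightarrow> (f has_integral prim f t) {0..t}"
  unfolding loc_int_def prim_def by (simp add: integrable_integral)

lemma loc_int_prim: "loc_int f \<Longrightarrow> loc_int (prim f)"
  by (rule loc_int_continuous) (rule continuous_on_prim)

lemma loc_int_funpow_prim: "loc_int f \<Longrightarrow> loc_int ((prim ^^ k) f)"
  by (induction k) (auto intro: loc_int_prim)

lemma loc_int_add: "loc_int f \<Longrightarrow> loc_int g \<Longrightarrow> loc_int (\<lambda>s. f s + g s)"
  unfolding loc_int_def by (simp add: integrable_add)

lemma loc_int_diff: "loc_int f \<Longrightarrow> loc_int g \<Longrightarrow> loc_int (\<lambda>s. f s - g s)"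
  unfolding loc_int_def by (simp add: integrable_diff)

lemma loc_int_cmult: "loc_int f \<Longrightarrow> loc_int (\<lambda>s. k * f s)"
  unfolding loc_int_def using integrable_cmul[of f _ k] by simp

lemma loc_int_sum:
  "(\<And>j. j \<in> S \<Longrightarrow> loc_int (f j)) \<Longrightarrow> loc_int (\<lambda>s. \<Sum>j\<in>S. f j s)"
  unfolding loc_int_def by (cases "finite S") (simp_all add: integrable_sum integrable_0)

lemma loc_int_const: "loc_int (\<lambda>s. k)"
  by (rule loc_int_continuous) simp

lemma loc_int_power: "loc_int (\<lambda>s. k * s ^ m / fact m)"
  by (rule loc_int_continuous) (intro continuous_intros, simp)

lemmas loc_int_intros = loc_int_add loc_int_diff loc_int_cmult loc_int_sum loc_int_const
  loc_int_funpow_prim loc_int_prim loc_int_power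

lemma loc_int_absolutely_integrable:
  assumes "\<forall>t\<ge>0. f absolutely_integrable_on {0..t}"
  shows "loc_int f"
  unfolding loc_int_def
proof
  fix t :: real
  show "f integrable_on {0..t}"
  proof (cases "0 \<le> t")
    case True
    then show ?thesis using assms absolutely_integrable_on_def by blast
  next
    case False
    then show ?thesis by (simp add: integrable_on_empty)
  qed
qed

lemma prim_cmult [simp]: "prim (\<lambda>s. k * f s) t = k * prim f t"
  unfolding prim_def by simp

lemma prim_minus [simp]: "prim (\<lambda>s. - f s) t = - prim f t"
  unfolding prim_def by simp

lemma prim_add: "loc_int f \<Longrightarrow> loc_int g \<Longrightarrow> prim (\<lambda>s. f s + g s) t = prim f t + prim g t"
  unfolding loc_int_def prim_def by (simp add: integral_add)

lemma prim_diff: "loc_int f \<Longrightarrow> loc_int g \<Longrightarrow> prim (\<lambda>s. f s - g s) t = prim f t - prim g t"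
  unfolding loc_int_def prim_def by (simp add: integral_diff)

lemma prim_sum:
  "(\<And>j. j \<in> S \<Longrightarrow> loc_int (f j)) \<Longrightarrow> prim (\<lambda>s. \<Sum>j\<in>S. f j s) t = (\<Sum>j\<in>S. prim (f j) t)"
  unfolding loc_int_def prim_def by (cases "finite S") (simp_all add: integral_sum)

lemma prim_cong: "(\<And>s. 0 \<le> s \<Longrightarrow> s \<le> t \<Longrightarrow> f s = g s) \<Longrightarrow> prim f t = prim g t"
  unfolding prim_def by (rule integral_cong) auto

lemma prim_power: "0 \<le> t \<Longrightarrow> prim (\<lambda>s. k * s ^ m / fact m) t = k * t ^ Suc m / fact (Suc m)"
proof -
  assume t: "0 \<le> t"
  have "((\<lambda>s. k * s ^ m / fact m) has_integral
      (k * t ^ Suc m / fact (Suc m) - k * 0 ^ Suc m / fact (Suc m))) {0..t}"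
    apply (rule fundamental_theorem_of_calculus[OF t])
    apply (rule has_real_derivative_iff_has_vector_derivative[THEN iffD1])
    apply (rule derivative_eq_intros refl | simp)+
    done
  then show ?thesis
    unfolding prim_def by (simp only: integral_unique) simp
qed

lemma funpow_prim_cmult [simp]: "(prim ^^ k) (\<lambda>s. c * f s) t = c * (prim ^^ k) f t"
proof (induction k arbitrary: t)
  case (Suc k)
  then have "(prim ^^ k) (\<lambda>s. c * f s) = (\<lambda>t. c * (prim ^^ k) f t)"
    by (simp add: fun_eq_iff)
  then show ?case by simp
qed simp

lemma funpow_prim_sum:
  "(\<And>j. j \<in> S \<Longrightarrow> loc_int (f j)) \<Longrightarrow>
   (prim ^^ k) (\<lambda>s. \<Sum>j\<in>S. f j s) t = (\<Sum>j\<in>S. (prim ^^ k) (f j) t)"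
proof (induction k arbitrary: t)
  case (Suc k)
  then have "(prim ^^ k) (\<lambda>s. \<Sum>j\<in>S. f j s) = (\<lambda>t. \<Sum>j\<in>S. (prim ^^ k) (f j) t)"
    by (simp add: fun_eq_iff)
  then show ?case using Suc.prems by (simp add: prim_sum loc_int_funpow_prim)
qed simp

lemma funpow_prim_add:
  "loc_int f \<Longrightarrow> loc_int g \<Longrightarrow> (prim ^^ k) (\<lambda>s. f s + g s) t = (prim ^^ k) f t + (prim ^^ k) g t"
  using funpow_prim_sum[of "{True, False}" "\<lambda>b. if b then f else g" k t] by simp

lemma funpow_prim_diff:
  "loc_int f \<Longrightarrow> loc_int g \<Longrightarrow> (prim ^^ k) (\<lambda>s. f s - g s) t = (prim ^^ k) f t - (prim ^^ k) g t"
proof (induction k arbitrary: t)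
  case (Suc k)
  then have "(prim ^^ k) (\<lambda>s. f s - g s) = (\<lambda>t. (prim ^^ k) f t - (prim ^^ k) g t)"
    by (simp add: fun_eq_iff)
  then show ?case using Suc.prems by (simp add: prim_diff loc_int_funpow_prim)
qed simp

lemma funpow_prim_cong:
  "(\<And>s. 0 \<le> s \<Longrightarrow> f s = g s) \<Longrightarrow> 0 \<le> t \<Longrightarrow> (prim ^^ k) f t = (prim ^^ k) g t"
proof (induction k arbitrary: t)
  case (Suc k)
  then show ?case by (simp, intro prim_cong) auto
qed simp

lemma funpow_commute: "(g ^^ a) ((g ^^ b) x) = (g ^^ b) ((g ^^ a) x)"
  by (metis add.commute comp_apply funpow_add)

lemma funpow_prim_prim: "(prim ^^ k) (prim f) = (prim ^^ Suc k) f"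
  by (metis funpow_Suc_right o_apply)

lemma prim_funpow_prim: "prim ((prim ^^ k) f) = (prim ^^ Suc k) f"
  by simp

lemmas prim_simps = prim_add prim_diff prim_sum prim_power prim_funpow_prim loc_int_intros

section \<open>Linear systems in integral form\<close>

lemma lin_sol_has_integral:
  "lin_sol m M f z0 z \<Longrightarrow> i < m \<Longrightarrow> 0 \<le> t \<Longrightarrow>
   ((\<lambda>s. (\<Sum>j<m. M i j * z s j) + f s i) has_integral (z t i - z0 i)) {0..t}"
  unfolding lin_sol_def by blast

lemma lin_sol_eq_integral:
  "lin_sol m M f z0 z \<Longrightarrow> i < m \<Longrightarrow> 0 \<le> t \<Longrightarrow>
   z t i = z0 i + integral {0..t} (\<lambda>s. (\<Sum>j<m. M i j * z s j) + f s i)"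
  using lin_sol_has_integral[of m M f z0 z i t] by (simp add: integral_unique)

lemma lin_sol_initial: "lin_sol m M f z0 z \<Longrightarrow> i < m \<Longrightarrow> z 0 i = z0 i"
  using lin_sol_eq_integral[of m M f z0 z i 0] by simp

lemma continuous_on_lin_sol:
  assumes "lin_sol m M f z0 z" "i < m"
  shows "continuous_on {0..T} (\<lambda>t. z t i)"
proof (cases "0 \<le> T")
  case True
  let ?g = "\<lambda>s. (\<Sum>j<m. M i j * z s j) + f s i"
  have "?g integrable_on {0..T}"
    using lin_sol_has_integral[OF assms True] by blast
  then have "continuous_on {0..T} (\<lambda>t. z0 i + integral {0..t} ?g)"
    by (intro continuous_intros indefinite_integral_continuous_1)
  then show ?thesis
    by (rule continuous_on_eq) (use lin_sol_eq_integral[OF assms] in auto)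
qed auto

lemma loc_int_lin_sol: "lin_sol m M f z0 z \<Longrightarrow> i < m \<Longrightarrow> loc_int (\<lambda>t. z t i)"
  by (rule loc_int_continuous) (rule continuous_on_lin_sol)

lemma lin_sol_prim:
  assumes L: "lin_sol m M f z0 z" and i: "i < m" and f: "loc_int (\<lambda>s. f s i)" and t: "0 \<le> t"
  shows "z t i = z0 i + (\<Sum>j<m. M i j * prim (\<lambda>s. z s j) t) + prim (\<lambda>s. f s i) t"
proof -
  have z: "loc_int (\<lambda>s. z s j)" if "j < m" for j
    using loc_int_lin_sol[OF L that] .
  have "z t i = z0 i + prim (\<lambda>s. (\<Sum>j<m. M i j * z s j) + f s i) t"
    using lin_sol_eq_integral[OF L i t] unfolding prim_def .
  also have "prim (\<lambda>s. (\<Sum>j<m. M i j * z s j) + f s i) t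
      = prim (\<lambda>s. \<Sum>j<m. M i j * z s j) t + prim (\<lambda>s. f s i) t"
    by (rule prim_add[OF _ f]) (use z in \<open>auto intro!: loc_int_intros\<close>)
  also have "prim (\<lambda>s. \<Sum>j<m. M i j * z s j) t = (\<Sum>j<m. M i j * prim (\<lambda>s. z s j) t)"
    by (subst prim_sum) (use z in \<open>auto intro: loc_int_intros\<close>)
  finally show ?thesis by simp
qed

lemma lin_sol_homogeneous_has_derivative:
  assumes L: "lin_sol m M (\<lambda>s i. 0) z0 z" and i: "i < m" and x: "0 < x"
  shows "((\<lambda>t. z t i) has_real_derivative (\<Sum>j<m. M i j * z x j)) (at x)"
proof -
  let ?g = "\<lambda>s. \<Sum>j<m. M i j * z s j"
  have "continuous_on {0..x + 1} ?g"
    by (intro continuous_intros continuous_on_lin_sol[OF L]) auto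
  then have "((\<lambda>t. integral {0..t} ?g) has_real_derivative ?g x) (at x within {0..x + 1})"
    by (rule integral_has_real_derivative) (use x in auto)
  then have "((\<lambda>t. z0 i + integral {0..t} ?g) has_real_derivative ?g x) (at x within {0..x + 1})"
    using DERIV_add[OF DERIV_const] by fastforce
  then have "((\<lambda>t. z t i) has_real_derivative ?g x) (at x within {0..x + 1})"
    by (rule has_field_derivative_transform_within[where d = 1])
      (use x lin_sol_eq_integral[OF L i] in auto)
  then show ?thesis
    using at_within_Icc_at[of 0 x "x + 1"] x by simp
qed

lemma quadratic_form_le:
  fixes d :: "nat \<Rightarrow> real"
  shows "(\<Sum>i<m. d i * (\<Sum>j<m. M i j * d j)) \<le> (\<Sum>i<m. \<Sum>j<m. \<bar>M i j\<bar>) * (\<Sum>i<m. (d i)\<^sup>2)"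
proof -
  let ?S = "\<Sum>i<m. (d i)\<^sup>2"
  have sq: "(d i)\<^sup>2 \<le> ?S" if "i < m" for i
    using that by (intro member_le_sum) auto
  have "d i * (M i j * d j) \<le> \<bar>M i j\<bar> * ?S" if "i < m" "j < m" for i j
  proof -
    have "\<bar>d i * d j\<bar> \<le> ((d i)\<^sup>2 + (d j)\<^sup>2) / 2"
      using sum_squares_bound[of "\<bar>d i\<bar>" "\<bar>d j\<bar>"]
      by (simp add: abs_mult power2_eq_square field_simps)
    also have "\<dots> \<le> ?S"
      using sq[OF that(1)] sq[OF that(2)] by simp
    finally have "\<bar>d i * d j\<bar> \<le> ?S" .
    then have "\<bar>M i j\<bar> * \<bar>d i * d j\<bar> \<le> \<bar>M i j\<bar> * ?S"
      by (simp add: mult_left_mono)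
    moreover have "d i * (M i j * d j) \<le> \<bar>M i j\<bar> * \<bar>d i * d j\<bar>"
      by (metis abs_ge_self abs_mult mult.left_commute)
    ultimately show ?thesis by linarith
  qed
  then have "(\<Sum>i<m. \<Sum>j<m. d i * (M i j * d j)) \<le> (\<Sum>i<m. \<Sum>j<m. \<bar>M i j\<bar> * ?S)"
    by (intro sum_mono) auto
  then have "(\<Sum>i<m. d i * (\<Sum>j<m. M i j * d j)) \<le> (\<Sum>i<m. \<Sum>j<m. \<bar>M i j\<bar> * ?S)"
    by (simp add: sum_distrib_left)
  also have "\<dots> = (\<Sum>i<m. \<Sum>j<m. \<bar>M i j\<bar>) * ?S"
    by (simp add: sum_distrib_right)
  finally show ?thesis .
qed

lemma lin_sol_homogeneous_sum_squares_has_derivative: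
  assumes L: "lin_sol m M (\<lambda>s i. 0) z0 d" and x: "0 < x"
  shows "((\<lambda>t. \<Sum>i<m. (d t i)\<^sup>2) has_real_derivative 2 * (\<Sum>i<m. d x i * (\<Sum>j<m. M i j * d x j))) (at x)"
proof -
  have "((\<lambda>t. (d t i)\<^sup>2) has_real_derivative 2 * (d x i * (\<Sum>j<m. M i j * d x j))) (at x)" if "i < m" for i
    using DERIV_mult[OF lin_sol_homogeneous_has_derivative[OF L that x]
        lin_sol_homogeneous_has_derivative[OF L that x]]
    by (simp add: power2_eq_square algebra_simps)
  then show ?thesis
    by (auto intro!: DERIV_sum simp: sum_distrib_left)
qed

text \<open>The energy \<open>\<Sum>i (d t i)\<^sup>2 * exp (-2 K t)\<close> is non-increasing, where \<open>K\<close> bounds the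
  quadratic form of \<open>M\<close>.\<close>

lemma lin_sol_homogeneous_eq_0:
  assumes L: "lin_sol m M (\<lambda>s i. 0) (\<lambda>i. 0) d" and T: "0 \<le> T" and i: "i < m"
  shows "d T i = 0"
proof -
  define K where "K = (\<Sum>i<m. \<Sum>j<m. \<bar>M i j\<bar>)"
  define S where "S t = (\<Sum>i<m. (d t i)\<^sup>2)" for t
  define V where "V t = S t * exp (- (2 * K) * t)" for t
  have "V T \<le> V 0"
  proof (rule DERIV_nonpos_imp_decreasing_open[OF T])
    fix x assume x: "0 < x" "x < T"
    let ?dS = "2 * (\<Sum>i<m. d x i * (\<Sum>j<m. M i j * d x j))"
    have "(S has_real_derivative ?dS) (at x)"
      unfolding S_def using lin_sol_homogeneous_sum_squares_has_derivative[OF L x(1)] .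
    then have "(V has_real_derivative (?dS - 2 * K * S x) * exp (- (2 * K) * x)) (at x)"
      unfolding V_def by (auto intro!: derivative_eq_intros simp: algebra_simps)
    moreover have "?dS \<le> 2 * K * S x"
      using quadratic_form_le[where d = "d x" and m = m and M = M] by (simp add: K_def S_def)
    ultimately show "\<exists>y. (V has_real_derivative y) (at x) \<and> y \<le> 0"
      by (intro exI conjI) (auto simp: mult_nonpos_nonneg)
  next
    show "continuous_on {0..T} V"
      unfolding V_def S_def by (intro continuous_intros continuous_on_lin_sol[OF L]) auto
  qed
  moreover have "V 0 = 0"
    unfolding V_def S_def using lin_sol_initial[OF L] by simp
  ultimately have "S T \<le> 0"
    unfolding V_def by (simp add: mult_le_0_iff)
  then have "S T = 0"
    unfolding S_def by (meson antisym sum_nonneg zero_le_power2)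
  then show ?thesis
    using i unfolding S_def by (simp add: sum_nonneg_eq_0_iff)
qed

lemma scalar_sol_iff_lin_sol:
  "(\<forall>t\<ge>0. ((\<lambda>s. k * z s + f s) has_integral z t) {0..t}) \<longleftrightarrow>
   lin_sol (Suc 0) (\<lambda>_ _. k) (\<lambda>s _. f s) (\<lambda>_. 0) (\<lambda>s _. z s)"
  unfolding lin_sol_def by simp

lemma loc_int_scalar_sol:
  "\<forall>t\<ge>0. ((\<lambda>s. k * z s + f s) has_integral z t) {0..t} \<Longrightarrow> loc_int z"
  using loc_int_lin_sol[of "Suc 0" _ _ _ "\<lambda>s _. z s" 0] unfolding scalar_sol_iff_lin_sol by simp

lemma scalar_sol_prim:
  "\<forall>t\<ge>0. ((\<lambda>s. k * z s + f s) has_integral z t) {0..t} \<Longrightarrow> loc_int f \<Longrightarrow> 0 \<le> t \<Longrightarrow>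
   z t = k * prim z t + prim f t"
  using lin_sol_prim[of "Suc 0" _ _ _ "\<lambda>s _. z s" 0] unfolding scalar_sol_iff_lin_sol by simp

lemma prim_fixpoint_eq_0:
  assumes w: "loc_int w" and eq: "\<forall>t\<ge>0. w t = k * prim w t" and t: "0 \<le> t"
  shows "w t = 0"
proof -
  have "\<forall>t\<ge>0. ((\<lambda>s. k * w s + 0) has_integral w t) {0..t}"
    using has_integral_prim[OF loc_int_cmult[OF w]] eq by simp
  then have "lin_sol (Suc 0) (\<lambda>_ _. k) (\<lambda>s _. 0) (\<lambda>_. 0) (\<lambda>s _. w s)"
    unfolding scalar_sol_iff_lin_sol .
  from lin_sol_homogeneous_eq_0[OF this t] show ?thesis
    by simp
qed

section \<open>Matrix exponential\<close>

lemma mpow_abs_le: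
  assumes "j < n"
  shows "\<bar>mpow n M k i j\<bar> \<le> (\<Sum>l<n. \<Sum>j<n. \<bar>M l j\<bar>) ^ k"
  using assms
proof (induction k arbitrary: j)
  case (Suc k)
  let ?L = "\<Sum>l<n. \<Sum>j<n. \<bar>M l j\<bar>"
  have "\<bar>mpow n M (Suc k) i j\<bar> \<le> (\<Sum>l<n. \<bar>mpow n M k i l\<bar> * \<bar>M l j\<bar>)"
    by (simp add: abs_mult[symmetric])
  also have "\<dots> \<le> (\<Sum>l<n. ?L ^ k * \<bar>M l j\<bar>)"
    by (intro sum_mono mult_right_mono Suc.IH) auto
  also have "\<dots> = ?L ^ k * (\<Sum>l<n. \<bar>M l j\<bar>)"
    by (simp add: sum_distrib_left)
  also have "\<dots> \<le> ?L ^ k * ?L"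
    by (intro mult_left_mono sum_mono member_le_sum) (use Suc.prems in \<open>auto intro!: zero_le_power sum_nonneg\<close>)
  finally show ?case by (simp add: mult.commute)
qed simp

lemma mpow_Suc_left:
  assumes "i < n" "j < n"
  shows "mpow n M (Suc k) i j = (\<Sum>l<n. M i l * mpow n M k l j)"
  using assms(2)
proof (induction k arbitrary: j)
  case 0
  then show ?case using assms(1) by (simp add: of_bool_def[symmetric])
next
  case (Suc k)
  have "mpow n M (Suc (Suc k)) i j = (\<Sum>l<n. mpow n M (Suc k) i l * M l j)"
    by (simp only: mpow.simps)
  also have "\<dots> = (\<Sum>l<n. \<Sum>l'<n. M i l' * (mpow n M k l' l * M l j))"
    using Suc.IH by (simp del: mpow.simps add: sum_distrib_right mult.assoc)
  also have "\<dots> = (\<Sum>l'<n. \<Sum>l<n. M i l' * (mpow n M k l' l * M l j))"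
    by (rule sum.swap)
  finally show ?case by (simp add: sum_distrib_left)
qed

lemma summable_mpow_series:
  assumes "i < n" "j < n"
  shows "summable (\<lambda>k. mpow n M k i j / fact k * y ^ k)"
proof (rule summable_comparison_test')
  let ?L = "\<Sum>l<n. \<Sum>j<n. \<bar>M l j\<bar>"
  show "summable (\<lambda>k. inverse (fact k) * (?L * \<bar>y\<bar>) ^ k)"
    by (rule summable_exp)
  fix k :: nat
  have "norm (mpow n M k i j / fact k * y ^ k) = \<bar>mpow n M k i j\<bar> * \<bar>y\<bar> ^ k / fact k"
    by (simp add: abs_mult power_abs)
  also have "\<dots> \<le> ?L ^ k * \<bar>y\<bar> ^ k / fact k"
    by (intro divide_right_mono mult_right_mono mpow_abs_le assms(2)) auto
  finally show "norm (mpow n M k i j / fact k * y ^ k) \<le> inverse (fact k) * (?L * \<bar>y\<bar>) ^ k"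
    by (simp add: field_simps)
qed

lemma mexp_eq_suminf: "mexp n M t i j = (\<Sum>k. mpow n M k i j / fact k * t ^ k)"
  unfolding mexp_def by (simp add: mult_ac)

lemma mexp_0: "mexp n M 0 i j = (if i = j then 1 else 0)"
  unfolding mexp_eq_suminf using powser_zero[of "\<lambda>k. mpow n M k i j / fact k"] by simp

lemma mexp_has_real_derivative:
  assumes "i < n" "j < n"
  shows "((\<lambda>t. mexp n M t i j) has_real_derivative (\<Sum>l<n. M i l * mexp n M t l j)) (at t)"
proof -
  let ?c = "\<lambda>k. mpow n M k i j / fact k"
  have "((\<lambda>t. \<Sum>k. ?c k * t ^ k) has_real_derivative (\<Sum>k. diffs ?c k * t ^ k)) (at t)"
    by (rule termdiffs_strong_converges_everywhere) (rule summable_mpow_series[OF assms])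
  moreover have "diffs ?c k = mpow n M (Suc k) i j / fact k" for k
    unfolding diffs_def by (simp del: mpow.simps)
  moreover have "mpow n M (Suc k) i j / fact k * t ^ k = (\<Sum>l<n. M i l * (mpow n M k l j / fact k * t ^ k))" for k
    using assms
    by (simp del: mpow.simps add: mpow_Suc_left sum_distrib_left sum_divide_distrib mult_ac)
  moreover have "(\<Sum>k. \<Sum>l<n. M i l * (mpow n M k l j / fact k * t ^ k))
      = (\<Sum>l<n. \<Sum>k. M i l * (mpow n M k l j / fact k * t ^ k))"
    by (rule suminf_sum, rule summable_mult, rule summable_mpow_series) (use assms in auto)
  moreover have "(\<Sum>k. M i l * (mpow n M k l j / fact k * t ^ k)) = M i l * mexp n M t l j"
    if "l < n" for l
    unfolding mexp_eq_suminf by (rule suminf_mult[OF summable_mpow_series]) (use that assms in auto)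
  ultimately show ?thesis
    unfolding mexp_eq_suminf by simp
qed

definition mexp_vec :: "nat \<Rightarrow> (nat \<Rightarrow> nat \<Rightarrow> real) \<Rightarrow> (nat \<Rightarrow> real) \<Rightarrow> real \<Rightarrow> nat \<Rightarrow> real" where
  "mexp_vec n M x0 t i = (\<Sum>k<n. mexp n M t i k * x0 k)"

lemma mexp_vec_has_real_derivative:
  "i < n \<Longrightarrow> ((\<lambda>t. mexp_vec n M x0 t i) has_real_derivative (\<Sum>l<n. M i l * mexp_vec n M x0 t l)) (at t)"
proof -
  assume i: "i < n"
  have "((\<lambda>t. \<Sum>k<n. mexp n M t i k * x0 k) has_real_derivative
      (\<Sum>k<n. (\<Sum>l<n. M i l * mexp n M t l k) * x0 k)) (at t)"
    by (intro DERIV_sum DERIV_cmult_right mexp_has_real_derivative) (use i in auto)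
  moreover have "(\<Sum>k<n. (\<Sum>l<n. M i l * mexp n M t l k) * x0 k)
      = (\<Sum>l<n. M i l * (\<Sum>k<n. mexp n M t l k * x0 k))"
    by (simp add: sum_distrib_left sum_distrib_right mult.assoc) (rule sum.swap)
  ultimately show ?thesis
    unfolding mexp_vec_def by simp
qed

lemma mexp_vec_0: "i < n \<Longrightarrow> mexp_vec n M x0 0 i = x0 i"
  unfolding mexp_vec_def mexp_0 by (simp add: of_bool_def[symmetric])

lemma lin_sol_mexp_vec: "lin_sol n M (\<lambda>s i. 0) x0 (mexp_vec n M x0)"
  unfolding lin_sol_def
proof (intro allI impI)
  fix t :: real and i assume t: "0 \<le> t" and i: "i < n"
  have "((\<lambda>s. \<Sum>l<n. M i l * mexp_vec n M x0 s l) has_integral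
      (mexp_vec n M x0 t i - mexp_vec n M x0 0 i)) {0..t}"
    by (rule fundamental_theorem_of_calculus[OF t])
      (auto intro!: has_field_derivative_at_within mexp_vec_has_real_derivative[OF i]
        simp: has_real_derivative_iff_has_vector_derivative[symmetric])
  then show "((\<lambda>s. (\<Sum>j<n. M i j * mexp_vec n M x0 s j) + 0) has_integral mexp_vec n M x0 t i - x0 i) {0..t}"
    using mexp_vec_0[OF i] by simp
qed

section \<open>Companion matrices and the Volterra operator\<close>

lemma sum_lessThan_diff_reindex: "(\<Sum>j<n. g (n - j)) = (\<Sum>m<n. g (Suc m))"
proof -
  have "(\<Sum>m<n. g (Suc m)) = (\<Sum>j<n. g (Suc (n - Suc j)))"
    by (rule sum.nat_diff_reindex[symmetric])
  also have "\<dots> = (\<Sum>j<n. g (n - j))"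
    by (intro sum.cong refl) (simp add: Suc_diff_Suc)
  finally show ?thesis ..
qed

lemma companion_row:
  "i < n \<Longrightarrow> (\<Sum>j<n. companion n c i j * w j) =
    (if i = n - 1 then - (\<Sum>j<n. c (n - j) * w j) else w (Suc i))"
  by (auto simp: companion_def sum_negf if_distrib[where f = "\<lambda>x. x * _"] cong: if_cong)

lemma A_plant_row:
  "i < n \<Longrightarrow> (\<Sum>j<n. A_plant n a i j * w j) =
    (if i = 0 then 0 else w (i - 1)) - a (n - i) * w (n - 1)"
proof -
  assume i: "i < n"
  have "(\<Sum>j<n. A_plant n a i j * w j)
      = (\<Sum>j<n. (if j = n - 1 then - a (n - i) * w j else 0) + (if j \<noteq> n - 1 \<and> i = Suc j then w j else 0))"
    unfolding A_plant_def by (intro sum.cong) auto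
  also have "\<dots> = - a (n - i) * w (n - 1) + (\<Sum>j<n. if j \<noteq> n - 1 \<and> i = Suc j then w j else 0)"
    using i by (simp add: sum.distrib)
  also have "(\<Sum>j<n. if j \<noteq> n - 1 \<and> i = Suc j then w j else 0) = (if i = 0 then 0 else w (i - 1))"
  proof (cases i)
    case (Suc k)
    then have "(\<Sum>j<n. if j \<noteq> n - 1 \<and> i = Suc j then w j else 0) = (\<Sum>j<n. if j = k then w j else 0)"
      using i by (intro sum.cong) auto
    then show ?thesis using Suc i by simp
  qed simp
  finally show ?thesis by simp
qed

lemma mtrans_companion: "mtrans (companion n c) = A_plant n c"
  unfolding mtrans_def companion_def A_plant_def by (intro ext) auto

text \<open>\<open>volterra_op n c\<close> is \<open>1 + c\<^sub>1 I + ... + c\<^sub>n I\<^sup>n\<close> with \<open>I = prim\<close>, i.e. \<open>I\<^sup>n\<close> composed with the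
  differential operator of the characteristic polynomial \<open>s\<^sup>n + c\<^sub>1 s\<^sup>n\<^sup>-\<^sup>1 + ... + c\<^sub>n\<close>.\<close>

definition volterra_op :: "nat \<Rightarrow> (nat \<Rightarrow> real) \<Rightarrow> (real \<Rightarrow> real) \<Rightarrow> real \<Rightarrow> real" where
  "volterra_op n c f t = f t + (\<Sum>k<n. c (Suc k) * (prim ^^ Suc k) f t)"

lemma volterra_op_diff:
  "loc_int f \<Longrightarrow> loc_int g \<Longrightarrow> volterra_op n c (\<lambda>s. f s - g s) t = volterra_op n c f t - volterra_op n c g t"
  unfolding volterra_op_def by (simp del: funpow.simps add: funpow_prim_diff right_diff_distrib sum_subtractf)

lemma volterra_op_cmult [simp]: "volterra_op n c (\<lambda>s. k * f s) t = k * volterra_op n c f t"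
  unfolding volterra_op_def by (simp del: funpow.simps add: distrib_left sum_distrib_left mult_ac)

lemma volterra_op_sum:
  "finite S \<Longrightarrow> (\<And>j. j \<in> S \<Longrightarrow> loc_int (f j)) \<Longrightarrow>
   volterra_op n c (\<lambda>s. \<Sum>j\<in>S. f j s) t = (\<Sum>j\<in>S. volterra_op n c (f j) t)"
  unfolding volterra_op_def
  by (simp del: funpow.simps add: funpow_prim_sum sum_distrib_left sum.distrib sum.swap[of _ S])

lemma volterra_op_cong:
  "(\<And>s. 0 \<le> s \<Longrightarrow> f s = g s) \<Longrightarrow> 0 \<le> t \<Longrightarrow> volterra_op n c f t = volterra_op n c g t"
  unfolding volterra_op_def by (simp del: funpow.simps add: funpow_prim_cong[of f g])

lemma volterra_op_funpow_prim:
  assumes "loc_int f"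
  shows "volterra_op n c ((prim ^^ m) f) t = (prim ^^ m) (volterra_op n c f) t"
proof -
  have "(prim ^^ m) (volterra_op n c f) t
      = (prim ^^ m) f t + (\<Sum>k<n. c (Suc k) * (prim ^^ Suc k) ((prim ^^ m) f) t)"
    unfolding volterra_op_def
    by (simp del: funpow.simps add: funpow_prim_add funpow_prim_sum assms loc_int_intros
        funpow_commute[where g = prim and a = m])
  then show ?thesis
    unfolding volterra_op_def by simp
qed

lemma volterra_op_eq_0_imp:
  assumes d: "loc_int d" and n: "1 \<le> n" and zero: "\<forall>t\<ge>0. volterra_op n c d t = 0" and t: "0 \<le> t"
  shows "d t = 0"
proof -
  define D where "D s j = (prim ^^ (n - 1 - j)) d s" for s j
  have D: "loc_int (\<lambda>s. D s j)" for j
    unfolding D_def by (intro loc_int_intros d)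
  have "lin_sol n (companion n c) (\<lambda>s i. 0) (\<lambda>i. 0) D"
    unfolding lin_sol_def
  proof (intro allI impI)
    fix t :: real and i assume t: "0 \<le> t" and i: "i < n"
    let ?g = "\<lambda>s. \<Sum>j<n. companion n c i j * D s j"
    have "(?g has_integral prim ?g t) {0..t}"
      by (intro has_integral_prim loc_int_intros D)
    moreover have "prim ?g t = D t i"
    proof (cases "i = n - 1")
      case True
      have "prim ?g t = - (\<Sum>j<n. c (n - j) * (prim ^^ (n - j)) d t)"
        using i True n
        by (simp del: funpow.simps add: companion_row prim_simps d D_def Suc_diff_Suc sum_negf)
      also have "\<dots> = d t"
        using zero[rule_format, OF t]
        unfolding volterra_op_def sum_lessThan_diff_reindex[where g = "\<lambda>k. c k * (prim ^^ k) d t"]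
        by linarith
      finally show ?thesis using True unfolding D_def by simp
    next
      case False
      then show ?thesis
        using i by (simp del: funpow.simps add: companion_row D_def Suc_diff_Suc prim_funpow_prim)
    qed
    ultimately show "((\<lambda>s. (\<Sum>j<n. companion n c i j * D s j) + 0) has_integral D t i - 0) {0..t}"
      by simp
  qed
  from lin_sol_homogeneous_eq_0[OF this t, of "n - 1"] n show ?thesis
    unfolding D_def by simp
qed

section \<open>Filters and plant output\<close>

lemma companion_filter:
  assumes L: "lin_sol n (companion n c) (\<lambda>s i. B_r n i * v s) (\<lambda>_. 0) \<zeta>"
    and v: "loc_int v" and n: "1 \<le> n"
  shows companion_filter_chain:
      "\<And>t j. 0 \<le> t \<Longrightarrow> j < n \<Longrightarrow> \<zeta> t j = (prim ^^ (n - 1 - j)) (\<lambda>s. \<zeta> s (n - 1)) t"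
    and volterra_op_companion_filter:
      "\<And>t. 0 \<le> t \<Longrightarrow> volterra_op n c (\<lambda>s. \<zeta> s (n - 1)) t = prim v t"
proof -
  let ?F = "\<lambda>s. \<zeta> s (n - 1)"
  have row: "\<zeta> t i = 0 + (\<Sum>j<n. companion n c i j * prim (\<lambda>s. \<zeta> s j) t) + B_r n i * prim v t"
    if "i < n" "0 \<le> t" for i t
    using lin_sol_prim[OF L that(1) _ that(2)] v by (simp add: loc_int_cmult)
  have chain: "\<forall>t\<ge>0. \<zeta> t j = (prim ^^ k) ?F t" if "j + k = n - 1" for j k
    using that
  proof (induction k arbitrary: j)
    case (Suc k)
    show ?case
    proof (intro allI impI)
      fix t :: real assume t: "0 \<le> t"
      have "\<zeta> t j = prim (\<lambda>s. \<zeta> s (Suc j)) t"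
        using row[of j t] Suc.prems t by (simp add: companion_row B_r_def)
      also have "\<dots> = prim ((prim ^^ k) ?F) t"
        by (rule prim_cong) (use Suc in auto)
      finally show "\<zeta> t j = (prim ^^ Suc k) ?F t" by simp
    qed
  qed simp
  show "\<zeta> t j = (prim ^^ (n - 1 - j)) ?F t" if "0 \<le> t" "j < n" for t j
    using chain[of j "n - 1 - j"] that by simp
  show "volterra_op n c ?F t = prim v t" if t: "0 \<le> t" for t
  proof -
    have "prim (\<lambda>s. \<zeta> s j) t = (prim ^^ (n - j)) ?F t" if "j < n" for j
    proof -
      have "prim (\<lambda>s. \<zeta> s j) t = prim ((prim ^^ (n - 1 - j)) ?F) t"
        by (rule prim_cong) (use chain that in auto)
      moreover have "Suc (n - 1 - j) = n - j"
        using that by simp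
      ultimately show ?thesis
        by (simp only: prim_funpow_prim)
    qed
    then have "(\<Sum>j<n. c (n - j) * prim (\<lambda>s. \<zeta> s j) t) = (\<Sum>m<n. c (Suc m) * (prim ^^ Suc m) ?F t)"
      using sum_lessThan_diff_reindex[where g = "\<lambda>k. c k * (prim ^^ k) ?F t"] by simp
    with row[of "n - 1" t] n t show ?thesis
      unfolding volterra_op_def by (simp add: companion_row B_r_def)
  qed
qed

text \<open>A companion filter with output weights \<open>w\<close> realises the transfer function
  \<open>(w\<^sub>1 s\<^sup>n\<^sup>-\<^sup>1 + ... + w\<^sub>n) / (s\<^sup>n + c\<^sub>1 s\<^sup>n\<^sup>-\<^sup>1 + ... + c\<^sub>n)\<close>.\<close>

lemma volterra_op_filter_output:
  assumes L: "lin_sol n (companion n c) (\<lambda>s i. B_r n i * v s) (\<lambda>_. 0) \<zeta>"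
    and v: "loc_int v" and n: "1 \<le> n" and t: "0 \<le> t"
  shows "volterra_op n c (\<lambda>s. \<Sum>j<n. w (n - j) * \<zeta> s j) t = (\<Sum>m<n. w (Suc m) * (prim ^^ Suc m) v t)"
proof -
  let ?F = "\<lambda>s. \<zeta> s (n - 1)"
  have F: "loc_int ?F"
    using loc_int_lin_sol[OF L] n by simp
  have "(\<Sum>j<n. w (n - j) * \<zeta> s j) = (\<Sum>m<n. w (Suc m) * (prim ^^ m) ?F s)" if "0 \<le> s" for s
    using sum_lessThan_diff_reindex[where g = "\<lambda>k. w k * (prim ^^ (k - 1)) ?F s"]
      companion_filter_chain[OF L v n that]
    by (simp add: Suc_diff_Suc)
  then have "volterra_op n c (\<lambda>s. \<Sum>j<n. w (n - j) * \<zeta> s j) t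
      = volterra_op n c (\<lambda>s. \<Sum>m<n. w (Suc m) * (prim ^^ m) ?F s) t"
    by (rule volterra_op_cong) (use t in auto)
  also have "\<dots> = (\<Sum>m<n. w (Suc m) * volterra_op n c ((prim ^^ m) ?F) t)"
    using F by (simp add: volterra_op_sum loc_int_intros del: funpow.simps)
  also have "\<dots> = (\<Sum>m<n. w (Suc m) * (prim ^^ m) (prim v) t)"
  proof -
    have "volterra_op n c ((prim ^^ m) ?F) t = (prim ^^ m) (prim v) t" for m
      unfolding volterra_op_funpow_prim[OF F]
      by (rule funpow_prim_cong) (use volterra_op_companion_filter[OF L v n] t in auto)
    then show ?thesis by simp
  qed
  finally show ?thesis
    by (simp only: funpow_prim_prim)
qed

lemma volterra_op_plant_output:
  assumes L: "lin_sol n (A_plant n a) (\<lambda>s i. B_plant n b i * v s) x0 x"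
    and v: "loc_int v" and n: "1 \<le> n" and t: "0 \<le> t"
  shows "volterra_op n a (\<lambda>s. x s (n - 1)) t
    = (\<Sum>m<n. b (Suc m) * (prim ^^ Suc m) v t) + (\<Sum>m<n. x0 (n - 1 - m) * t ^ m / fact m)"
proof -
  let ?y = "\<lambda>s. x s (n - 1)"
  have x: "loc_int (\<lambda>s. x s j)" if "j < n" for j
    using loc_int_lin_sol[OF L that] .
  have y: "loc_int ?y"
    using x n by simp
  have row: "x t i = x0 i + (if i = 0 then 0 else prim (\<lambda>s. x s (i - 1)) t) - a (n - i) * prim ?y t
      + b (n - i) * prim v t" if "i < n" "0 \<le> t" for i t
    using lin_sol_prim[OF L that(1) _ that(2)] v that
    by (simp add: A_plant_row B_plant_def loc_int_cmult)
  have unrolled: "\<forall>t\<ge>0. x t i = (\<Sum>m\<le>i. x0 (i - m) * t ^ m / fact m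
      + b (n - i + m) * (prim ^^ Suc m) v t - a (n - i + m) * (prim ^^ Suc m) ?y t)"
    if "i < n" for i
    using that
  proof (induction i)
    case 0
    then show ?case using row[of 0] by simp
  next
    case (Suc i)
    show ?case
    proof (intro allI impI)
      fix t :: real assume t: "0 \<le> t"
      have "prim (\<lambda>s. x s i) t = prim (\<lambda>s. \<Sum>m\<le>i. x0 (i - m) * s ^ m / fact m
          + b (n - i + m) * (prim ^^ Suc m) v s - a (n - i + m) * (prim ^^ Suc m) ?y s) t"
        by (rule prim_cong) (use Suc in auto)
      also have "\<dots> = (\<Sum>m\<le>i. x0 (i - m) * t ^ Suc m / fact (Suc m)
          + b (n - Suc i + Suc m) * (prim ^^ Suc (Suc m)) v t
          - a (n - Suc i + Suc m) * (prim ^^ Suc (Suc m)) ?y t)"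
        using Suc.prems t v y by (simp add: prim_simps Suc_diff_Suc del: funpow.simps)
      finally show "x t (Suc i) = (\<Sum>m\<le>Suc i. x0 (Suc i - m) * t ^ m / fact m
          + b (n - Suc i + m) * (prim ^^ Suc m) v t - a (n - Suc i + m) * (prim ^^ Suc m) ?y t)"
        using row[OF Suc.prems t] unfolding sum.atMost_Suc_shift by simp
    qed
  qed
  have "{..n - 1} = {..<n}"
    using n by auto
  then have "?y t = (\<Sum>m<n. x0 (n - 1 - m) * t ^ m / fact m
      + b (Suc m) * (prim ^^ Suc m) v t - a (Suc m) * (prim ^^ Suc m) ?y t)"
    using unrolled[of "n - 1"] n t by (simp add: Suc_diff_le del: funpow.simps)
  then show ?thesis
    unfolding volterra_op_def by (simp add: sum.distrib sum_subtractf del: funpow.simps)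
qed

lemma plant_output_filter_repr:
  assumes n: "1 \<le> n" and u: "loc_int u"
    and plant: "lin_sol n (A_plant n a) (\<lambda>s i. B_plant n b i * u s) x0 x"
    and zeta: "lin_sol n (companion n c) (\<lambda>s i. B_r n i * u s) (\<lambda>_. 0) \<zeta>"
    and mu: "lin_sol n (companion n c) (\<lambda>s i. B_r n i * x s (n - 1)) (\<lambda>_. 0) \<mu>"
    and t: "0 \<le> t"
  shows "x t (n - 1) = (\<Sum>j<n. b (n - j) * \<zeta> t j) + (\<Sum>j<n. (c (n - j) - a (n - j)) * \<mu> t j)
    + mexp_vec n (A_plant n c) x0 t (n - 1)"
proof -
  let ?y = "\<lambda>s. x s (n - 1)"
  let ?E = "\<lambda>s. mexp_vec n (A_plant n c) x0 s (n - 1)"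
  let ?p = "\<lambda>t. \<Sum>m<n. x0 (n - 1 - m) * t ^ m / fact m"
  define r where "r s = ?y s - (\<Sum>j<n. b (n - j) * \<zeta> s j) - (\<Sum>j<n. (c (n - j) - a (n - j)) * \<mu> s j)" for s
  have y: "loc_int ?y"
    using loc_int_lin_sol[OF plant] n by simp
  have free: "lin_sol n (A_plant n c) (\<lambda>s i. B_plant n (\<lambda>_. 0) i * 0) x0 (mexp_vec n (A_plant n c) x0)"
    using lin_sol_mexp_vec by simp
  have E: "loc_int ?E"
    using loc_int_lin_sol[OF free] n by simp
  have \<zeta>: "loc_int (\<lambda>s. \<Sum>j<n. w j * \<zeta> s j)" for w
    using loc_int_lin_sol[OF zeta] by (intro loc_int_intros) auto
  have \<mu>: "loc_int (\<lambda>s. \<Sum>j<n. w j * \<mu> s j)" for w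
    using loc_int_lin_sol[OF mu] by (intro loc_int_intros) auto
  have r: "loc_int r"
    unfolding r_def using y \<zeta> \<mu> by (intro loc_int_diff)
  have "volterra_op n c r s = ?p s" if s: "0 \<le> s" for s
  proof -
    have "volterra_op n c r s = volterra_op n c ?y s
        - volterra_op n c (\<lambda>s. \<Sum>j<n. b (n - j) * \<zeta> s j) s
        - volterra_op n c (\<lambda>s. \<Sum>j<n. (c (n - j) - a (n - j)) * \<mu> s j) s"
      unfolding r_def using y \<zeta> \<mu>
      by (simp add: volterra_op_diff loc_int_diff)
    also have "\<dots> = volterra_op n c ?y s - (\<Sum>m<n. b (Suc m) * (prim ^^ Suc m) u s)
        - (\<Sum>m<n. (c (Suc m) - a (Suc m)) * (prim ^^ Suc m) ?y s)"
      by (simp only: volterra_op_filter_output[OF zeta u n s, of b]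
          volterra_op_filter_output[OF mu y n s, of "\<lambda>k. c k - a k"])
    also have "\<dots> = volterra_op n a ?y s - (\<Sum>m<n. b (Suc m) * (prim ^^ Suc m) u s)"
      unfolding volterra_op_def by (simp add: left_diff_distrib sum_subtractf del: funpow.simps)
    finally show ?thesis
      using volterra_op_plant_output[OF plant u n s] by simp
  qed
  moreover have "volterra_op n c ?E s = ?p s" if "0 \<le> s" for s
    using volterra_op_plant_output[OF free loc_int_const n that] by simp
  ultimately have "\<forall>s\<ge>0. volterra_op n c (\<lambda>s. r s - ?E s) s = 0"
    using volterra_op_diff[OF r E] by simp
  from volterra_op_eq_0_imp[OF loc_int_diff[OF r E] n this t] show ?thesis
    unfolding r_def by simp
qed

section \<open>The filtered regressor\<close>

text \<open>With \<open>\<phi>, \<upsilon>, \<epsilon>\<close> the outputs of \<open>1/(s + \<beta>)\<close> driven by \<open>z, u, g\<close>, the difference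
  \<open>w = \<phi>' - A \<phi> - B \<upsilon> - \<epsilon>\<close> satisfies \<open>w = - \<beta> prim w\<close>.\<close>

lemma filtered_state_identity:
  fixes A :: "nat \<Rightarrow> nat \<Rightarrow> real" and B :: "nat \<Rightarrow> real"
  assumes chi: "lin_sol m A (\<lambda>s i. B i * u s + g s i) (\<lambda>_. 0) z"
    and phi: "lin_sol m (\<lambda>i j. if i = j then - \<beta> else 0) z (\<lambda>_. 0) \<phi>"
    and ups: "\<forall>t\<ge>0. ((\<lambda>s. - \<beta> * \<upsilon> s + u s) has_integral \<upsilon> t) {0..t}"
    and eps: "\<forall>t\<ge>0. ((\<lambda>s. - \<beta> * \<epsilon> s + g s i) has_integral \<epsilon> t) {0..t}"
    and u: "loc_int u" and g: "loc_int (\<lambda>s. g s i)" and i: "i < m" and t: "0 \<le> t"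
  shows "z t i - \<beta> * \<phi> t i = (\<Sum>j<m. A i j * \<phi> t j) + B i * \<upsilon> t + \<epsilon> t"
proof -
  have z: "loc_int (\<lambda>s. z s j)" if "j < m" for j
    using loc_int_lin_sol[OF chi that] .
  have \<phi>: "loc_int (\<lambda>s. \<phi> s j)" if "j < m" for j
    using loc_int_lin_sol[OF phi that] .
  have \<upsilon>: "loc_int \<upsilon>"
    using loc_int_scalar_sol[OF ups] .
  have \<epsilon>: "loc_int \<epsilon>"
    using loc_int_scalar_sol[OF eps] .
  define w where "w s = z s i - \<beta> * \<phi> s i - (\<Sum>j<m. A i j * \<phi> s j) - B i * \<upsilon> s - \<epsilon> s" for s
  have "w s = - \<beta> * prim w s" if s: "0 \<le> s" for s
  proof -
    let ?Z = "\<lambda>j. prim (\<lambda>s. z s j) s" and ?P = "\<lambda>j. prim (\<lambda>s. \<phi> s j) s"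
    have z_eq: "z s i = (\<Sum>j<m. A i j * ?Z j) + B i * prim u s + prim (\<lambda>s. g s i) s"
      using lin_sol_prim[OF chi i loc_int_add[OF loc_int_cmult[OF u] g] s] u g
      by (simp add: prim_add loc_int_cmult)
    have \<phi>_eq: "\<phi> s j = - \<beta> * ?P j + ?Z j" if "j < m" for j
      using lin_sol_prim[OF phi that z[OF that] s] that
      by (simp add: if_distrib[where f = "\<lambda>x. x * _"] cong: if_cong)
    have A\<phi>_eq: "(\<Sum>j<m. A i j * \<phi> s j) = (\<Sum>j<m. A i j * ?Z j) - \<beta> * (\<Sum>j<m. A i j * ?P j)"
    proof -
      have "(\<Sum>j<m. A i j * \<phi> s j) = (\<Sum>j<m. A i j * ?Z j - \<beta> * (A i j * ?P j))"
        by (intro sum.cong refl) (simp add: \<phi>_eq algebra_simps)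
      then show ?thesis
        by (simp add: sum_subtractf sum_distrib_left)
    qed
    have \<upsilon>_eq: "\<upsilon> s = - \<beta> * prim \<upsilon> s + prim u s"
      using scalar_sol_prim[OF ups u s] by simp
    have \<epsilon>_eq: "\<epsilon> s = - \<beta> * prim \<epsilon> s + prim (\<lambda>s. g s i) s"
      using scalar_sol_prim[OF eps g s] by simp
    have A\<phi>: "loc_int (\<lambda>s. \<Sum>j<m. A i j * \<phi> s j)"
      using \<phi> by (intro loc_int_intros) auto
    have "prim (\<lambda>s. \<Sum>j<m. A i j * \<phi> s j) s = (\<Sum>j<m. A i j * ?P j)"
      using \<phi> by (subst prim_sum) (auto intro: loc_int_intros)
    then have prim_w: "prim w s = ?Z i - \<beta> * ?P i - (\<Sum>j<m. A i j * ?P j) - B i * prim \<upsilon> s - prim \<epsilon> s"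
      unfolding w_def using z \<phi> \<upsilon> \<epsilon> A\<phi> i by (simp add: prim_simps)
    show ?thesis
      unfolding prim_w by (simp add: w_def z_eq \<phi>_eq[OF i] A\<phi>_eq \<upsilon>_eq \<epsilon>_eq algebra_simps)
  qed
  moreover have "loc_int w"
    unfolding w_def using z \<phi> \<upsilon> \<epsilon> i by (intro loc_int_intros) auto
  ultimately have "w t = 0"
    using prim_fixpoint_eq_0 t by blast
  then show ?thesis
    unfolding w_def by simp
qed

lemma sylvester_weighted_state_has_derivative:
  fixes \<Gamma> M G :: "nat \<Rightarrow> nat \<Rightarrow> real"
  assumes sylvester: "\<forall>j<n. (\<Sum>k<n. \<Gamma> i k * M k j) + \<beta> * \<Gamma> i j = G i j"
  shows "((\<lambda>s. \<Sum>j<n. \<Gamma> i j * mexp_vec n M x0 s j) has_real_derivative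
    (\<Sum>l<n. G i l * mexp_vec n M x0 s l) - \<beta> * (\<Sum>l<n. \<Gamma> i l * mexp_vec n M x0 s l)) (at s)"
proof -
  let ?E = "mexp_vec n M x0"
  have "((\<lambda>s. \<Sum>j<n. \<Gamma> i j * ?E s j) has_real_derivative
      (\<Sum>j<n. \<Gamma> i j * (\<Sum>l<n. M j l * ?E s l))) (at s)"
    by (intro DERIV_sum DERIV_cmult mexp_vec_has_real_derivative) simp
  moreover have "(\<Sum>j<n. \<Gamma> i j * (\<Sum>l<n. M j l * ?E s l)) = (\<Sum>l<n. (\<Sum>j<n. \<Gamma> i j * M j l) * ?E s l)"
    by (simp add: sum_distrib_left sum_distrib_right mult.assoc) (rule sum.swap)
  also have "\<dots> = (\<Sum>l<n. (G i l - \<beta> * \<Gamma> i l) * ?E s l)"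
    by (intro sum.cong refl) (use sylvester in \<open>simp add: eq_diff_eq\<close>)
  ultimately show ?thesis
    by (simp add: left_diff_distrib sum_subtractf sum_distrib_left mult.assoc)
qed

lemma sylvester_error_sol:
  fixes \<Gamma> M G :: "nat \<Rightarrow> nat \<Rightarrow> real" and x0 :: "nat \<Rightarrow> real"
  assumes sylvester: "\<forall>j<n. (\<Sum>k<n. \<Gamma> i k * M k j) + \<beta> * \<Gamma> i j = G i j"
    and t: "0 \<le> t"
  defines "\<epsilon> \<equiv> \<lambda>s. \<Sum>j<n. \<Gamma> i j * (\<Sum>k<n. (mexp n M s j k - (if j = k then exp (- \<beta> * s) else 0)) * x0 k)"
  shows "((\<lambda>s. - \<beta> * \<epsilon> s + (\<Sum>l<n. G i l * mexp_vec n M x0 s l)) has_integral \<epsilon> t) {0..t}"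
proof -
  let ?E = "mexp_vec n M x0" and ?c = "\<Sum>j<n. \<Gamma> i j * x0 j"
  have \<epsilon>_eq: "\<epsilon> s = (\<Sum>j<n. \<Gamma> i j * ?E s j) - exp (- \<beta> * s) * ?c" for s
  proof -
    have "(\<Sum>k<n. (mexp n M s j k - (if j = k then exp (- \<beta> * s) else 0)) * x0 k)
        = ?E s j - exp (- \<beta> * s) * x0 j" if "j < n" for j
      using that by (simp add: mexp_vec_def left_diff_distrib sum_subtractf
          if_distrib[where f = "\<lambda>x. x * _"] cong: if_cong)
    then show ?thesis
      unfolding \<epsilon>_def by (simp add: right_diff_distrib sum_subtractf sum_distrib_left mult.left_commute)
  qed
  have "(\<epsilon> has_real_derivative - \<beta> * \<epsilon> s + (\<Sum>l<n. G i l * ?E s l)) (at s)" for s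
  proof -
    have "((\<lambda>s. exp (- \<beta> * s) * ?c) has_real_derivative exp (- \<beta> * s) * - \<beta> * ?c) (at s)"
      by (auto intro!: derivative_eq_intros)
    from DERIV_diff[OF sylvester_weighted_state_has_derivative[where \<Gamma> = \<Gamma> and i = i and G = G,
        OF sylvester] this]
    show ?thesis
      unfolding \<epsilon>_eq[abs_def] by (simp add: algebra_simps)
  qed
  then have "((\<lambda>s. - \<beta> * \<epsilon> s + (\<Sum>l<n. G i l * ?E s l)) has_integral \<epsilon> t - \<epsilon> 0) {0..t}"
    by (intro fundamental_theorem_of_calculus[OF t])
      (auto intro: has_field_derivative_at_within simp: has_real_derivative_iff_has_vector_derivative[symmetric])
  moreover have "\<epsilon> 0 = 0"
    unfolding \<epsilon>_eq by (simp add: mexp_vec_0)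
  ultimately show ?thesis by simp
qed

lemma sum_lessThan_twice: "(\<Sum>j<2 * (n::nat). f j) = (\<Sum>j<n. f j) + (\<Sum>j<n. f (n + j))"
proof -
  have "(\<Sum>j<2 * n. f j) = sum f {0..<n} + sum f {n..<n + n}"
    by (simp add: lessThan_atLeast0 sum.atLeastLessThan_concat mult_2)
  also have "sum f {n..<n + n} = (\<Sum>j<n. f (n + j))"
    using sum.shift_bounds_nat_ivl[of f 0 n n] by (simp add: lessThan_atLeast0 add.commute)
  finally show ?thesis by (simp add: lessThan_atLeast0)
qed

lemma A_f_row_top:
  "i < n \<Longrightarrow> (\<Sum>j<2 * n. A_f n a b c i j * z j) = (\<Sum>j<n. companion n c i j * z j)"
  by (simp add: sum_lessThan_twice A_f_def)

lemma A_f_row_bottom: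
  "k < n \<Longrightarrow> (\<Sum>j<2 * n. A_f n a b c (n + k) j * z j)
    = (\<Sum>j<n. L_b n b k j * z j) + (\<Sum>j<n. companion n a k j * z (n + j))"
  by (simp add: sum_lessThan_twice A_f_def)

lemma L_b_row: "(\<Sum>j<n. L_b n b k j * w j) = (if k = n - 1 then \<Sum>j<n. b (n - j) * w j else 0)"
  by (simp add: L_b_def)

lemma G_f_row:
  "1 \<le> n \<Longrightarrow> (\<Sum>l<n. G_f n i l * w l) = (if i = 2 * n - 1 then w (n - 1) else 0)"
  by (auto simp: G_f_def if_distrib[where f = "\<lambda>x. x * _"] cong: if_cong)

lemma stacked_filter_bottom_row:
  assumes n: "1 \<le> n" and u: "loc_int u"
    and plant: "lin_sol n (A_plant n a) (\<lambda>s i. B_plant n b i * u s) x0 x"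
    and zeta: "lin_sol n (companion n c) (\<lambda>s i. B_r n i * u s) (\<lambda>_. 0) \<zeta>"
    and mu: "lin_sol n (companion n c) (\<lambda>s i. B_r n i * x s (n - 1)) (\<lambda>_. 0) \<mu>"
    and k: "k < n" and s: "0 \<le> s"
  shows "(\<Sum>j<2 * n. A_f n a b c (n + k) j * (if j < n then \<zeta> s j else \<mu> s (j - n)))
      + (B_f n (n + k) * u s + (\<Sum>l<n. G_f n (n + k) l * mexp_vec n (A_plant n c) x0 s l))
    = (\<Sum>j<n. companion n c k j * \<mu> s j) + B_r n k * x s (n - 1)"
    (is "?lhs = _")
proof -
  have "n + k \<noteq> n - 1" "n + k = 2 * n - 1 \<longleftrightarrow> k = n - 1"
    using k n by auto
  then have row: "?lhs = (\<Sum>j<n. L_b n b k j * \<zeta> s j) + (\<Sum>j<n. companion n a k j * \<mu> s j)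
      + (if k = n - 1 then mexp_vec n (A_plant n c) x0 s (n - 1) else 0)"
    using k n by (simp add: A_f_row_bottom G_f_row B_f_def)
  show ?thesis
  proof (cases "k = n - 1")
    case True
    then show ?thesis
      unfolding row using plant_output_filter_repr[OF n u plant zeta mu s] k n
      by (simp add: L_b_row B_r_def companion_row left_diff_distrib sum_subtractf sum_negf)
  next
    case False
    then show ?thesis
      unfolding row using k by (simp add: L_b_row B_r_def companion_row)
  qed
qed

lemma lin_sol_stacked_filters:
  assumes n: "1 \<le> n" and u: "loc_int u"
    and plant: "lin_sol n (A_plant n a) (\<lambda>s i. B_plant n b i * u s) x0 x"
    and zeta: "lin_sol n (companion n c) (\<lambda>s i. B_r n i * u s) (\<lambda>_. 0) \<zeta>"
    and mu: "lin_sol n (companion n c) (\<lambda>s i. B_r n i * x s (n - 1)) (\<lambda>_. 0) \<mu>"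
  shows "lin_sol (2 * n) (A_f n a b c)
    (\<lambda>s i. B_f n i * u s + (\<Sum>l<n. G_f n i l * mexp_vec n (A_plant n c) x0 s l)) (\<lambda>_. 0)
    (\<lambda>s i. if i < n then \<zeta> s i else \<mu> s (i - n))"
  unfolding lin_sol_def
proof (intro allI impI)
  fix t :: real and i assume t: "0 \<le> t" and i: "i < 2 * n"
  let ?z = "\<lambda>s i. if i < n then \<zeta> s i else \<mu> s (i - n)"
  let ?E = "mexp_vec n (A_plant n c) x0"
  let ?lhs = "\<lambda>s. (\<Sum>j<2 * n. A_f n a b c i j * ?z s j) + (B_f n i * u s + (\<Sum>l<n. G_f n i l * ?E s l))"
  show "(?lhs has_integral ?z t i - 0) {0..t}"
  proof (cases "i < n")
    case True
    have "i \<noteq> 2 * n - 1"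
      using True by linarith
    then have "(\<Sum>j<n. companion n c i j * \<zeta> s j) + B_r n i * u s = ?lhs s" for s
      using True n by (simp add: A_f_row_top G_f_row B_f_def B_r_def)
    then show ?thesis
      using has_integral_eq[OF _ lin_sol_has_integral[OF zeta True t]] True by simp
  next
    case False
    define k where "k = i - n"
    have k: "k < n" "i = n + k"
      using i False unfolding k_def by auto
    have "(\<Sum>j<n. companion n c k j * \<mu> s j) + B_r n k * x s (n - 1) = ?lhs s" if "0 \<le> s" for s
      unfolding k(2) using stacked_filter_bottom_row[OF n u plant zeta mu k(1) that] by simp
    then show ?thesis
      using has_integral_eq[OF _ lin_sol_has_integral[OF mu k(1) t]] k by simp
  qed
qed

theorem lemma1:
  fixes n :: nat and a b c :: "nat \<Rightarrow> real" and \<beta> :: real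
    and u :: "real \<Rightarrow> real" and x0 :: "nat \<Rightarrow> real"
    and x \<zeta> \<mu> \<phi> :: "real \<Rightarrow> nat \<Rightarrow> real" and \<upsilon> :: "real \<Rightarrow> real"
    and \<Gamma> :: "nat \<Rightarrow> nat \<Rightarrow> real"
  assumes n: "n \<ge> 1"
    and A1: "coprime (den_poly n a) (num_poly n b)"
    and A2: "\<not> is_eigenvalue n (companion n c) (- \<beta>)"
    and Gam: "\<forall>i<2*n. \<forall>j<n. (\<Sum>k<n. \<Gamma> i k * mtrans (companion n c) k j) + \<beta> * \<Gamma> i j = G_f n i j"
    and u_loc: "\<forall>t\<ge>0. u absolutely_integrable_on {0..t}"
    and plant: "lin_sol n (A_plant n a) (\<lambda>s i. B_plant n b i * u s) x0 x"
    and zeta: "lin_sol n (companion n c) (\<lambda>s i. B_r n i * u s) (\<lambda>_. 0) \<zeta>"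
    and mu: "lin_sol n (companion n c) (\<lambda>s i. B_r n i * x s (n - 1)) (\<lambda>_. 0) \<mu>"
    and phi: "lin_sol (2*n) (\<lambda>i j. if i = j then - \<beta> else 0)
                (\<lambda>s i. if i < n then \<zeta> s i else \<mu> s (i - n)) (\<lambda>_. 0) \<phi>"
    and ups: "\<forall>t\<ge>0. ((\<lambda>s. - \<beta> * \<upsilon> s + u s) has_integral \<upsilon> t) {0..t}"
  shows "\<forall>t\<ge>0. \<forall>i<2*n.
     (if i < n then \<zeta> t i else \<mu> t (i - n)) - \<beta> * \<phi> t i
     = (\<Sum>j<2*n. A_f n a b c i j * \<phi> t j) + B_f n i * \<upsilon> t
       + (\<Sum>j<n. \<Gamma> i j * (\<Sum>k<n. (mexp n (mtrans (companion n c)) t j k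
                                   - (if j = k then exp (- \<beta> * t) else 0)) * x0 k))"
proof (intro allI impI)
  fix t :: real and i assume t: "0 \<le> t" and i: "i < 2 * n"
  let ?E = "mexp_vec n (A_plant n c) x0"
  have u: "loc_int u"
    using loc_int_absolutely_integrable[OF u_loc] .
  have E: "loc_int (\<lambda>s. \<Sum>l<n. G_f n i l * ?E s l)"
    using loc_int_lin_sol[OF lin_sol_mexp_vec] by (intro loc_int_intros) auto
  define \<epsilon> where "\<epsilon> s = (\<Sum>j<n. \<Gamma> i j * (\<Sum>k<n. (mexp n (A_plant n c) s j k
      - (if j = k then exp (- \<beta> * s) else 0)) * x0 k))" for s
  have sylvester: "\<forall>j<n. (\<Sum>k<n. \<Gamma> i k * A_plant n c k j) + \<beta> * \<Gamma> i j = G_f n i j"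
    using Gam i unfolding mtrans_companion by blast
  have "\<forall>t\<ge>0. ((\<lambda>s. - \<beta> * \<epsilon> s + (\<Sum>l<n. G_f n i l * ?E s l)) has_integral \<epsilon> t) {0..t}"
    unfolding \<epsilon>_def
    using sylvester_error_sol[where \<Gamma> = \<Gamma> and i = i and M = "A_plant n c" and G = "G_f n", OF sylvester]
    by blast
  from filtered_state_identity[OF lin_sol_stacked_filters[OF n u plant zeta mu] phi ups this u E i t]
  show "(if i < n then \<zeta> t i else \<mu> t (i - n)) - \<beta> * \<phi> t i
     = (\<Sum>j<2*n. A_f n a b c i j * \<phi> t j) + B_f n i * \<upsilon> t
       + (\<Sum>j<n. \<Gamma> i j * (\<Sum>k<n. (mexp n (mtrans (companion n c)) t j k
                                   - (if j = k then exp (- \<beta> * t) else 0)) * x0 k))"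
    unfolding \<epsilon>_def mtrans_companion .
qed

end
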